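(* Let $I$ be an index set and $\prec$ a linear order on $I$. Suppose $\mathcal F$ and $\mathcal G$ are two $\prec$-ordered, reduced TDDs over $I$ with $\Phi(\mathcal F)=\Phi(\mathcal G)$. Then $\mathcal F$ and $\mathcal G$ are isomorphic.
   Context: Indices take values in $\{0,1\}$; a tensor over $I$ is a map $\{0,1\}^I\to\mathbb{C}$ (tensors over subsets of $I$ are regarded as tensors over $I$ not depending on the other indices). Each index $x$ is regarded as the tensor $x(c)=c$, and $\overline{x}(c):=1-c$; operations on tensors are pointwise. A TDD over $I$ is $\mathcal F=(V,E,index,value,low,high,w)$: a rooted directed acyclic graph with finite node set $V$ partitioned into non-terminal nodes $V_N$ and terminal nodes $V_T$, root $r_{\mathcal F}$; $index:V_N\to I$; $value:V_T\to\mathbb{C}$; $low,high:V_N\to V$; edges are the low-edges $(v,low(v))$ and high-edges $(v,high(v))$, $v\in V_N$, plus a unique source-less incoming edge $e_r$ of the root; $w$ gives each edge a complex weight and $w_{\mathcal F}:=w(e_r)$. Node tensors: $\Phi(v)=value(v)$ for terminal $v$; otherwise $\Phi(v)=w_0\overline{x_v}\Phi(low(v))+w_1x_v\Phi(high(v))$ with $x_v=index(v)$ and $w_0,w_1$ the low-/high-edge weights. The TDD represents $\Phi(\mathcal F):=w_{\mathcal F}\Phi(r_{\mathcal F})$. $\mathcal F$ is $\prec$-ordered if for every non-terminal node $v$, $index(v)\prec index(low(v))$ whenever $low(v)$ is non-terminal and $index(v)\prec index(high(v))$ whenever $high(v)$ is non-terminal. Normality (w.r.t. $\prec$): the pivot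 of a tensor $\phi$ is the lexicographically smallest (compare at the $\prec$-smallest differing index, $0<1$) $\vec a$ with $|\phi(\vec a)|=\max_{\vec b}|\phi(\vec b)|$; $\phi$ is normal if $\phi=0$ or $\phi$ equals $1$ at its pivot. A TDD is normal if $\Phi(v)$ is normal for every node $v$. A TDD is reduced if it is normal and (1) $\Phi(v)\neq0$ for every node $v$; (2) all edges of weight $0$ point to the unique terminal node, which has value $1$; (3) $\Phi(u)\neq\Phi(v)$ for any two distinct nodes $u\neq v$. Two TDDs are isomorphic if there is a graph isomorphism between them (including the root edges $e_r$) preserving node indices, edge weights and terminal values, and mapping low-edges to low-edges and high-edges to high-edges. *)

theory Defs
  imports Complex_Main
begin

text \<open>Indices range over a finite linearly ordered type 'i (the index set I with
  the order given by the linorder instance).  An assignment of values in {0,1}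
  to the indices is a function 'i \<Rightarrow> bool (True = 1).\<close>

type_synonym 'i assignment = "'i \<Rightarrow> bool"
type_synonym 'i tensor = "'i assignment \<Rightarrow> complex"

definition idx_tensor :: "'i \<Rightarrow> 'i tensor" where
  "idx_tensor x = (\<lambda>a. of_bool (a x))"

definition lex_less :: "('i::linorder) assignment \<Rightarrow> 'i assignment \<Rightarrow> bool" where
  "lex_less a b \<longleftrightarrow> (\<exists>i. a i \<noteq> b i \<and> (\<forall>j. j < i \<longrightarrow> a j = b j) \<and> \<not> a i \<and> b i)"

definition max_abs :: "('i::finite) tensor \<Rightarrow> real" where
  "max_abs \<phi> = Max (range (\<lambda>b. cmod (\<phi> b)))"

definition pivot :: "('i::{finite,linorder}) tensor \<Rightarrow> 'i assignment" where
  "pivot \<phi> = (THE a. cmod (\<phi> a) = max_abs \<phi> \<and>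
      (\<forall>b. cmod (\<phi> b) = max_abs \<phi> \<longrightarrow> b \<noteq> a \<longrightarrow> lex_less a b))"

definition normal_tensor :: "('i::{finite,linorder}) tensor \<Rightarrow> bool" where
  "normal_tensor \<phi> \<longleftrightarrow> \<phi> = (\<lambda>_. 0) \<or> \<phi> (pivot \<phi>) = 1"

text \<open>A TDD with node type 'v.  nodes = V, nterm = V_N (non-terminal nodes),
  terminal nodes are nodes - nterm.  Each non-terminal node v has exactly one
  low-edge (v, lo v) of weight wlo v and one high-edge (v, hi v) of weight whi v;
  wroot is the weight of the root edge e_r.\<close>
record ('i, 'v) tdd =
  nodes :: "'v set"
  nterm :: "'v set"
  root :: 'v
  idx :: "'v \<Rightarrow> 'i"
  val :: "'v \<Rightarrow> complex"
  lo :: "'v \<Rightarrow> 'v"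
  hi :: "'v \<Rightarrow> 'v"
  wlo :: "'v \<Rightarrow> complex"
  whi :: "'v \<Rightarrow> complex"
  wroot :: complex

definition term_nodes :: "('i, 'v) tdd \<Rightarrow> 'v set" where
  "term_nodes F = nodes F - nterm F"

definition tdd_edges :: "('i, 'v) tdd \<Rightarrow> ('v \<times> 'v) set" where
  "tdd_edges F = {(v, lo F v) | v. v \<in> nterm F} \<union> {(v, hi F v) | v. v \<in> nterm F}"

definition wf_tdd :: "('i, 'v) tdd \<Rightarrow> bool" where
  "wf_tdd F \<longleftrightarrow> finite (nodes F) \<and> nterm F \<subseteq> nodes F \<and> root F \<in> nodes F
     \<and> (\<forall>v\<in>nterm F. lo F v \<in> nodes F \<and> hi F v \<in> nodes F)
     \<and> acyclic (tdd_edges F)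
     \<and> (\<forall>v\<in>nodes F. (root F, v) \<in> (tdd_edges F)\<^sup>*)"

text \<open>Node tensors: the unique assignment of tensors to nodes satisfying the
  defining equations (unique because the graph is acyclic).\<close>
definition node_tensor :: "('i, 'v) tdd \<Rightarrow> 'v \<Rightarrow> 'i tensor" where
  "node_tensor F = (THE f.
     (\<forall>v\<in>nodes F. f v =
        (if v \<in> nterm F then
           (\<lambda>a. wlo F v * (1 - idx_tensor (idx F v) a) * f (lo F v) a
              + whi F v * idx_tensor (idx F v) a * f (hi F v) a)
         else (\<lambda>a. val F v)))
     \<and> (\<forall>v. v \<notin> nodes F \<longrightarrow> f v = (\<lambda>a. 0)))"

definition tdd_tensor :: "('i, 'v) tdd \<Rightarrow> 'i tensor" where
  "tdd_tensor F = (\<lambda>a. wroot F * node_tensor F (root F) a)"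

definition ordered_tdd :: "('i::linorder, 'v) tdd \<Rightarrow> bool" where
  "ordered_tdd F \<longleftrightarrow> (\<forall>v\<in>nterm F.
     (lo F v \<in> nterm F \<longrightarrow> idx F v < idx F (lo F v)) \<and>
     (hi F v \<in> nterm F \<longrightarrow> idx F v < idx F (hi F v)))"

definition normal_tdd :: "('i::{finite,linorder}, 'v) tdd \<Rightarrow> bool" where
  "normal_tdd F \<longleftrightarrow> (\<forall>v\<in>nodes F. normal_tensor (node_tensor F v))"

definition unique_one_terminal :: "('i, 'v) tdd \<Rightarrow> 'v \<Rightarrow> bool" where
  "unique_one_terminal F t \<longleftrightarrow> t \<in> term_nodes F \<and> term_nodes F = {t} \<and> val F t = 1"

definition reduced_tdd :: "('i::{finite,linorder}, 'v) tdd \<Rightarrow> bool" where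
  "reduced_tdd F \<longleftrightarrow> normal_tdd F
     \<and> (\<forall>v\<in>nodes F. node_tensor F v \<noteq> (\<lambda>_. 0))
     \<and> (wroot F = 0 \<longrightarrow> unique_one_terminal F (root F))
     \<and> (\<forall>v\<in>nterm F. (wlo F v = 0 \<longrightarrow> unique_one_terminal F (lo F v))
                   \<and> (whi F v = 0 \<longrightarrow> unique_one_terminal F (hi F v)))
     \<and> (\<forall>u\<in>nodes F. \<forall>v\<in>nodes F. u \<noteq> v \<longrightarrow> node_tensor F u \<noteq> node_tensor F v)"

text \<open>Isomorphism: a bijection of nodes (which induces a bijection of edges, since
  the edges are determined by their source and kind) preserving the root, the
  root-edge weight, non-terminality, indices, terminal values, edge weights and
  low/high successors.\<close>
definition tdd_iso :: "('i, 'v) tdd \<Rightarrow> ('i, 'w) tdd \<Rightarrow> bool" where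
  "tdd_iso F G \<longleftrightarrow> (\<exists>h. bij_betw h (nodes F) (nodes G)
     \<and> h (root F) = root G \<and> wroot F = wroot G
     \<and> (\<forall>v\<in>nodes F. v \<in> nterm F \<longleftrightarrow> h v \<in> nterm G)
     \<and> (\<forall>v\<in>term_nodes F. val G (h v) = val F v)
     \<and> (\<forall>v\<in>nterm F. idx G (h v) = idx F v
          \<and> h (lo F v) = lo G (h v) \<and> h (hi F v) = hi G (h v)
          \<and> wlo G (h v) = wlo F v \<and> whi G (h v) = whi F v))"

end

theory Submission
  imports Defs
begin

text \<open>In an ordered TDD the tensor of a node v does not depend on indices preceding
  index v, and reducedness forces the tensor of a non-terminal node to depend on
  index v itself; so the index of a node is determined by its tensor.  Normality
  makes the decomposition of a tensor into weighted normal cofactors unique, so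
  nodes with equal tensors have equal indices, equal edge weights and children with
  equal tensors.  Starting from the roots, every node of one TDD thus has a node
  with the same tensor in the other, and since distinct nodes of a reduced TDD carry
  distinct tensors, matching equal tensors is the isomorphism.\<close>

lemma lo_in_tdd_edges: "v \<in> nterm F \<Longrightarrow> (v, lo F v) \<in> tdd_edges F"
  and hi_in_tdd_edges: "v \<in> nterm F \<Longrightarrow> (v, hi F v) \<in> tdd_edges F"
  unfolding tdd_edges_def by blast+

lemma tdd_edgesE:
  assumes "(v, c) \<in> tdd_edges F"
  obtains "v \<in> nterm F" and "c = lo F v \<or> c = hi F v"
  using assms unfolding tdd_edges_def by blast

lemma finite_tdd_edges: "wf_tdd F \<Longrightarrow> finite (tdd_edges F)"
proof -
  assume "wf_tdd F"
  then have "finite (nterm F)" unfolding wf_tdd_def by (meson finite_subset)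
  moreover have "tdd_edges F = (\<lambda>v. (v, lo F v)) ` nterm F \<union> (\<lambda>v. (v, hi F v)) ` nterm F"
    unfolding tdd_edges_def by blast
  ultimately show ?thesis by simp
qed

lemma wf_converse_tdd_edges: "wf_tdd F \<Longrightarrow> wf ((tdd_edges F)\<inverse>)"
  by (rule finite_acyclic_wf_converse) (auto simp: finite_tdd_edges wf_tdd_def)

lemma root_in_nodes: "wf_tdd F \<Longrightarrow> root F \<in> nodes F"
  and nterm_in_nodes: "wf_tdd F \<Longrightarrow> v \<in> nterm F \<Longrightarrow> v \<in> nodes F"
  and lo_in_nodes: "wf_tdd F \<Longrightarrow> v \<in> nterm F \<Longrightarrow> lo F v \<in> nodes F"
  and hi_in_nodes: "wf_tdd F \<Longrightarrow> v \<in> nterm F \<Longrightarrow> hi F v \<in> nodes F"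
  unfolding wf_tdd_def by blast+

subsection \<open>Node tensors\<close>

definition node_tensor_step :: "('i, 'v) tdd \<Rightarrow> ('v \<Rightarrow> 'i tensor) \<Rightarrow> 'v \<Rightarrow> 'i tensor" where
  "node_tensor_step F f v =
     (if v \<in> nodes F then
        (if v \<in> nterm F then
           (\<lambda>a. wlo F v * (1 - idx_tensor (idx F v) a) * f (lo F v) a
              + whi F v * idx_tensor (idx F v) a * f (hi F v) a)
         else (\<lambda>a. val F v))
      else (\<lambda>a. 0))"

lemma node_tensor_step_cong:
  assumes "v \<in> nterm F \<Longrightarrow> f (lo F v) = g (lo F v) \<and> f (hi F v) = g (hi F v)"
  shows "node_tensor_step F f v = node_tensor_step F g v"
  using assms unfolding node_tensor_step_def by simp

lemma node_tensor_eq_The_fixpoint: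
  "node_tensor F = (THE f. \<forall>v. f v = node_tensor_step F f v)"
proof -
  have split_nodes: "(\<forall>x\<in>A. f x = g x) \<and> (\<forall>x. x \<notin> A \<longrightarrow> f x = h x)
      \<longleftrightarrow> (\<forall>x. f x = (if x \<in> A then g x else h x))" for A f g h
    by auto
  show ?thesis
    unfolding node_tensor_def node_tensor_step_def split_nodes ..
qed

lemma ex1_node_tensor_step_fixpoint:
  assumes "wf_tdd F"
  shows "\<exists>!f. \<forall>v. f v = node_tensor_step F f v"
proof -
  define R where "R = (tdd_edges F)\<inverse>"
  have wf_R: "wf R" unfolding R_def using wf_converse_tdd_edges[OF assms] .
  define f where "f = wfrec R (node_tensor_step F)"
  have f_fixpoint: "f v = node_tensor_step F f v" for v
  proof -
    have "f v = node_tensor_step F (cut f R v) v"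
      unfolding f_def by (rule wfrec[OF wf_R])
    also have "\<dots> = node_tensor_step F f v"
      by (rule node_tensor_step_cong)
        (simp add: R_def cut_apply lo_in_tdd_edges hi_in_tdd_edges)
    finally show ?thesis .
  qed
  show ?thesis
  proof (rule ex1I[of _ f])
    show "\<forall>v. f v = node_tensor_step F f v" using f_fixpoint ..
    show "g = f" if g: "\<forall>v. g v = node_tensor_step F g v" for g
    proof
      fix v
      show "g v = f v"
        using wf_R
      proof (induction v rule: wf_induct_rule)
        case (less v)
        have "node_tensor_step F g v = node_tensor_step F f v"
          by (rule node_tensor_step_cong) (simp add: less.IH R_def lo_in_tdd_edges hi_in_tdd_edges)
        then show ?case using g f_fixpoint[of v] by simp
      qed
    qed
  qed
qed

lemma node_tensor_fixpoint:
  "wf_tdd F \<Longrightarrow> \<forall>v. node_tensor F v = node_tensor_step F (node_tensor F) v"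
  unfolding node_tensor_eq_The_fixpoint by (rule theI'[OF ex1_node_tensor_step_fixpoint])

lemma node_tensor_nterm:
  assumes "wf_tdd F" and "v \<in> nterm F"
  shows "node_tensor F v a =
     wlo F v * (1 - idx_tensor (idx F v) a) * node_tensor F (lo F v) a
       + whi F v * idx_tensor (idx F v) a * node_tensor F (hi F v) a"
  using node_tensor_fixpoint[OF assms(1), rule_format, of v] nterm_in_nodes[OF assms]
  unfolding node_tensor_step_def by (simp add: assms(2))

lemma node_tensor_term:
  assumes "wf_tdd F" and "v \<in> nodes F" and "v \<notin> nterm F"
  shows "node_tensor F v = (\<lambda>_. val F v)"
  using node_tensor_fixpoint[OF assms(1), rule_format, of v] assms(2,3)
  unfolding node_tensor_step_def by simp

subsection \<open>Ordered TDDs\<close>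

lemma node_tensor_cong_from_idx:
  assumes "wf_tdd F" and "ordered_tdd F" and "v \<in> nodes F"
    and "\<And>j. v \<in> nterm F \<Longrightarrow> idx F v \<le> j \<Longrightarrow> a j = b j"
  shows "node_tensor F v a = node_tensor F v b"
  using wf_converse_tdd_edges[OF assms(1)] assms(3,4)
proof (induction v arbitrary: a b rule: wf_induct_rule)
  case (less v)
  show ?case
  proof (cases "v \<in> nterm F")
    case True
    have child: "node_tensor F c a = node_tensor F c b" if c: "c = lo F v \<or> c = hi F v" for c
    proof (rule less.IH)
      show "(c, v) \<in> (tdd_edges F)\<inverse>"
        using c True by (auto simp: lo_in_tdd_edges hi_in_tdd_edges)
      show "c \<in> nodes F"
        using c True lo_in_nodes[OF assms(1)] hi_in_nodes[OF assms(1)] by blast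
      show "a j = b j" if "c \<in> nterm F" and "idx F c \<le> j" for j
      proof -
        have "idx F v < idx F c"
          using assms(2) True c that(1) unfolding ordered_tdd_def by blast
        then show ?thesis
          using less.prems(2)[OF True] that(2) by (meson order.strict_implies_order order.trans)
      qed
    qed
    show ?thesis
      using node_tensor_nterm[OF assms(1) True] child less.prems(2)[OF True order_refl]
      by (simp add: idx_tensor_def)
  next
    case False
    then show ?thesis using node_tensor_term[OF assms(1) less.prems(1)] by simp
  qed
qed

lemma node_tensor_child_upd_idx:
  assumes "wf_tdd F" and "ordered_tdd F" and "v \<in> nterm F" and "c = lo F v \<or> c = hi F v"
  shows "node_tensor F c (a(idx F v := t)) = node_tensor F c a"
proof (rule node_tensor_cong_from_idx[OF assms(1,2)])
  show "c \<in> nodes F"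
    using assms(3,4) lo_in_nodes[OF assms(1)] hi_in_nodes[OF assms(1)] by blast
  show "(a(idx F v := t)) j = a j" if "c \<in> nterm F" and "idx F c \<le> j" for j
    using that assms(2-4) unfolding ordered_tdd_def by force
qed

lemma node_tensor_lo_cofactor:
  assumes "wf_tdd F" and "ordered_tdd F" and "v \<in> nterm F"
  shows "node_tensor F v (a(idx F v := False)) = wlo F v * node_tensor F (lo F v) a"
  using node_tensor_nterm[OF assms(1,3)] node_tensor_child_upd_idx[OF assms]
  by (simp add: idx_tensor_def)

lemma node_tensor_hi_cofactor:
  assumes "wf_tdd F" and "ordered_tdd F" and "v \<in> nterm F"
  shows "node_tensor F v (a(idx F v := True)) = whi F v * node_tensor F (hi F v) a"
  using node_tensor_nterm[OF assms(1,3)] node_tensor_child_upd_idx[OF assms]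
  by (simp add: idx_tensor_def)

subsection \<open>Normal tensors\<close>

lemma max_abs_scale:
  fixes \<phi> :: "('i::finite) tensor"
  shows "max_abs (\<lambda>a. c * \<phi> a) = cmod c * max_abs \<phi>"
proof -
  have "mono (\<lambda>x::real. cmod c * x)" by (simp add: mono_def mult_left_mono)
  then have "cmod c * max_abs \<phi> = Max ((\<lambda>x. cmod c * x) ` range (\<lambda>b. cmod (\<phi> b)))"
    unfolding max_abs_def by (rule mono_Max_commute) auto
  also have "(\<lambda>x. cmod c * x) ` range (\<lambda>b. cmod (\<phi> b)) = range (\<lambda>b. cmod (c * \<phi> b))"
    by (auto simp: norm_mult)
  finally show ?thesis unfolding max_abs_def by simp
qed

lemma pivot_scale:
  fixes \<phi> :: "('i::{finite,linorder}) tensor"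
  assumes "c \<noteq> 0"
  shows "pivot (\<lambda>a. c * \<phi> a) = pivot \<phi>"
  using assms unfolding pivot_def by (simp add: max_abs_scale norm_mult)

lemma scale_nonzero_tensor_eq_0:
  fixes \<phi> :: "'i tensor"
  assumes "\<And>a. c * \<phi> a = 0" and "\<phi> \<noteq> (\<lambda>_. 0)"
  shows "c = 0"
proof -
  obtain a where "\<phi> a \<noteq> 0" using assms(2) by auto
  then show ?thesis using assms(1)[of a] by simp
qed

lemma normal_tensor_scale_eq:
  fixes \<phi> \<psi> :: "('i::{finite,linorder}) tensor"
  assumes "normal_tensor \<phi>" "\<phi> \<noteq> (\<lambda>_. 0)" "normal_tensor \<psi>" "\<psi> \<noteq> (\<lambda>_. 0)"
    and eq: "\<And>a. c * \<phi> a = d * \<psi> a"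
  shows "c = d \<and> (c \<noteq> 0 \<longrightarrow> \<phi> = \<psi>)"
proof (cases "c = 0 \<or> d = 0")
  case True
  moreover have "c = 0" if "d = 0"
  proof (rule scale_nonzero_tensor_eq_0[OF _ assms(2)])
    show "c * \<phi> a = 0" for a using eq[of a] that by simp
  qed
  moreover have "d = 0" if "c = 0"
  proof (rule scale_nonzero_tensor_eq_0[OF _ assms(4)])
    show "d * \<psi> a = 0" for a using eq[of a] that by simp
  qed
  ultimately show ?thesis by blast
next
  case False
  have \<psi>: "\<psi> = (\<lambda>a. (c / d) * \<phi> a)"
  proof
    show "\<psi> a = (c / d) * \<phi> a" for a
      using eq[of a] False by (simp add: field_simps)
  qed
  have "\<psi> (pivot \<psi>) = (c / d) * \<phi> (pivot \<phi>)"
    using pivot_scale[of "c / d" \<phi>] False \<psi> by simp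
  then have "c / d = 1"
    using assms(1-4) unfolding normal_tensor_def by simp
  then show ?thesis using \<psi> False by simp
qed

subsection \<open>Reduced TDDs\<close>

lemma reduced_normal_node_tensor:
  "reduced_tdd F \<Longrightarrow> v \<in> nodes F \<Longrightarrow> normal_tensor (node_tensor F v)"
  unfolding reduced_tdd_def normal_tdd_def by auto

lemma reduced_node_tensor_nonzero:
  "reduced_tdd F \<Longrightarrow> v \<in> nodes F \<Longrightarrow> node_tensor F v \<noteq> (\<lambda>_. 0)"
  unfolding reduced_tdd_def by auto

lemma reduced_inj_on_node_tensor: "reduced_tdd F \<Longrightarrow> inj_on (node_tensor F) (nodes F)"
  unfolding reduced_tdd_def inj_on_def by auto

lemma reduced_zero_weight_target:
  assumes "reduced_tdd F"
  shows "wroot F = 0 \<Longrightarrow> unique_one_terminal F (root F)"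
    and "v \<in> nterm F \<Longrightarrow> wlo F v = 0 \<Longrightarrow> unique_one_terminal F (lo F v)"
    and "v \<in> nterm F \<Longrightarrow> whi F v = 0 \<Longrightarrow> unique_one_terminal F (hi F v)"
  using assms unfolding reduced_tdd_def by blast+

lemma node_tensor_unique_one_terminal:
  "wf_tdd F \<Longrightarrow> unique_one_terminal F t \<Longrightarrow> node_tensor F t = (\<lambda>_. 1)"
  using node_tensor_term[of F t] unfolding unique_one_terminal_def term_nodes_def by auto

text \<open>Edges of weight 0 lead to the terminal of tensor 1; this pins down the node tensor
  even when the weight vanishes.\<close>

lemma reduced_weighted_node_tensor_eq:
  assumes "wf_tdd F" "wf_tdd G" "reduced_tdd F" "reduced_tdd G"
    and "c \<in> nodes F" "d \<in> nodes G"
    and "\<And>a. p * node_tensor F c a = q * node_tensor G d a"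
    and "p = 0 \<Longrightarrow> unique_one_terminal F c" "q = 0 \<Longrightarrow> unique_one_terminal G d"
  shows "p = q \<and> node_tensor F c = node_tensor G d"
proof -
  have pq: "p = q \<and> (p \<noteq> 0 \<longrightarrow> node_tensor F c = node_tensor G d)"
    by (rule normal_tensor_scale_eq[OF
          reduced_normal_node_tensor[OF assms(3,5)] reduced_node_tensor_nonzero[OF assms(3,5)]
          reduced_normal_node_tensor[OF assms(4,6)] reduced_node_tensor_nonzero[OF assms(4,6)]])
      (rule assms(7))
  show ?thesis
  proof (cases "p = 0")
    case True
    then have "node_tensor F c = (\<lambda>_. 1)" and "node_tensor G d = (\<lambda>_. 1)"
      using pq assms(8,9) node_tensor_unique_one_terminal assms(1,2) by simp_all
    then show ?thesis using pq by simp
  next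
    case False
    then show ?thesis using pq by simp
  qed
qed

lemma reduced_node_tensor_depends_on_idx:
  assumes w: "wf_tdd F" and "ordered_tdd F" and r: "reduced_tdd F" and v: "v \<in> nterm F"
  shows "\<exists>a. node_tensor F v (a(idx F v := False)) \<noteq> node_tensor F v (a(idx F v := True))"
proof (rule ccontr)
  assume "\<not> ?thesis"
  then have "wlo F v * node_tensor F (lo F v) a = whi F v * node_tensor F (hi F v) a" for a
    unfolding node_tensor_lo_cofactor[OF assms(1,2) v, symmetric]
      node_tensor_hi_cofactor[OF assms(1,2) v, symmetric] by simp
  then have "wlo F v = whi F v \<and> node_tensor F (lo F v) = node_tensor F (hi F v)"
    by (rule reduced_weighted_node_tensor_eq[OF w w r r lo_in_nodes[OF w v] hi_in_nodes[OF w v]])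
      (fact reduced_zero_weight_target(2,3)[OF r v])+
  then have v_lo: "node_tensor F v a = wlo F v * node_tensor F (lo F v) a" for a
    using node_tensor_nterm[OF w v] by (simp add: algebra_simps)
  have "wlo F v \<noteq> 0"
  proof
    assume "wlo F v = 0"
    then have "node_tensor F v = (\<lambda>_. 0)" using v_lo by (intro ext) simp
    then show False using reduced_node_tensor_nonzero[OF r nterm_in_nodes[OF w v]] by simp
  qed
  then have "1 = wlo F v \<and> node_tensor F v = node_tensor F (lo F v)"
    by (intro reduced_weighted_node_tensor_eq[OF w w r r nterm_in_nodes[OF w v] lo_in_nodes[OF w v]])
      (simp_all add: v_lo)
  then have "v = lo F v"
    using inj_onD[OF reduced_inj_on_node_tensor[OF r] _ nterm_in_nodes[OF w v] lo_in_nodes[OF w v]]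
    by simp
  then have "(v, v) \<in> (tdd_edges F)\<^sup>+"
    using lo_in_tdd_edges[OF v] by auto
  then show False using w unfolding wf_tdd_def acyclic_def by blast
qed

text \<open>The index of a non-terminal node is the least index on which its tensor depends.\<close>

lemma node_tensor_eq_imp_nterm_idx:
  fixes F :: "('i::{finite,linorder}, 'v) tdd" and G :: "('i, 'w) tdd"
  assumes wF: "wf_tdd F" and wG: "wf_tdd G" and oF: "ordered_tdd F" and oG: "ordered_tdd G"
    and rF: "reduced_tdd F" and rG: "reduced_tdd G"
    and v: "v \<in> nterm F" and u: "u \<in> nodes G" and eq: "node_tensor F v = node_tensor G u"
  shows "u \<in> nterm G \<and> idx G u = idx F v"
proof -
  obtain a where a: "node_tensor G u (a(idx F v := False)) \<noteq> node_tensor G u (a(idx F v := True))"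
    using reduced_node_tensor_depends_on_idx[OF wF oF rF v] unfolding eq by blast
  have uN: "u \<in> nterm G"
  proof (rule ccontr)
    assume "u \<notin> nterm G"
    then show False using a node_tensor_term[OF wG u] by simp
  qed
  have "\<not> idx F v < idx G u"
  proof
    assume lt: "idx F v < idx G u"
    have "node_tensor G u (a(idx F v := False)) = node_tensor G u (a(idx F v := True))"
      by (rule node_tensor_cong_from_idx[OF wG oG u]) (use lt in \<open>auto dest: leD\<close>)
    then show False using a by simp
  qed
  moreover have "\<not> idx G u < idx F v"
  proof
    assume lt: "idx G u < idx F v"
    obtain b
      where b: "node_tensor F v (b(idx G u := False)) \<noteq> node_tensor F v (b(idx G u := True))"
      using reduced_node_tensor_depends_on_idx[OF wG oG rG uN] unfolding eq by blast
    have "node_tensor F v (b(idx G u := False)) = node_tensor F v (b(idx G u := True))"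
      by (rule node_tensor_cong_from_idx[OF wF oF nterm_in_nodes[OF wF v]])
        (use lt in \<open>auto dest: leD\<close>)
    then show False using b by simp
  qed
  ultimately show ?thesis using uN by simp
qed

lemma node_tensor_eq_imp_nterm_match:
  fixes F :: "('i::{finite,linorder}, 'v) tdd" and G :: "('i, 'w) tdd"
  assumes wF: "wf_tdd F" and wG: "wf_tdd G" and oF: "ordered_tdd F" and oG: "ordered_tdd G"
    and rF: "reduced_tdd F" and rG: "reduced_tdd G"
    and v: "v \<in> nterm F" and u: "u \<in> nodes G" and eq: "node_tensor F v = node_tensor G u"
  shows "u \<in> nterm G \<and> idx G u = idx F v
    \<and> wlo G u = wlo F v \<and> node_tensor G (lo G u) = node_tensor F (lo F v)
    \<and> whi G u = whi F v \<and> node_tensor G (hi G u) = node_tensor F (hi F v)"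
proof -
  have uN: "u \<in> nterm G" and ix: "idx G u = idx F v"
    using node_tensor_eq_imp_nterm_idx[OF assms] by auto
  have "wlo F v * node_tensor F (lo F v) a = wlo G u * node_tensor G (lo G u) a" for a
    unfolding node_tensor_lo_cofactor[OF wF oF v, symmetric]
      node_tensor_lo_cofactor[OF wG oG uN, symmetric] using eq ix by simp
  then have "wlo F v = wlo G u \<and> node_tensor F (lo F v) = node_tensor G (lo G u)"
    by (rule reduced_weighted_node_tensor_eq[OF wF wG rF rG lo_in_nodes[OF wF v] lo_in_nodes[OF wG uN]])
      (fact reduced_zero_weight_target(2)[OF rF v] reduced_zero_weight_target(2)[OF rG uN])+
  moreover have "whi F v * node_tensor F (hi F v) a = whi G u * node_tensor G (hi G u) a" for a
    unfolding node_tensor_hi_cofactor[OF wF oF v, symmetric]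
      node_tensor_hi_cofactor[OF wG oG uN, symmetric] using eq ix by simp
  then have "whi F v = whi G u \<and> node_tensor F (hi F v) = node_tensor G (hi G u)"
    by (rule reduced_weighted_node_tensor_eq[OF wF wG rF rG hi_in_nodes[OF wF v] hi_in_nodes[OF wG uN]])
      (fact reduced_zero_weight_target(3)[OF rF v] reduced_zero_weight_target(3)[OF rG uN])+
  ultimately show ?thesis using uN ix by simp
qed

lemma node_tensor_eq_imp_nterm_iff:
  fixes F :: "('i::{finite,linorder}, 'v) tdd" and G :: "('i, 'w) tdd"
  assumes wF: "wf_tdd F" and wG: "wf_tdd G" and oF: "ordered_tdd F" and oG: "ordered_tdd G"
    and rF: "reduced_tdd F" and rG: "reduced_tdd G"
    and v: "v \<in> nodes F" and u: "u \<in> nodes G" and eq: "node_tensor F v = node_tensor G u"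
  shows "v \<in> nterm F \<longleftrightarrow> u \<in> nterm G"
  using node_tensor_eq_imp_nterm_idx[OF wF wG oF oG rF rG _ u eq]
    node_tensor_eq_imp_nterm_idx[OF wG wF oG oF rG rF _ v eq[symmetric]] by blast

subsection \<open>Reduced TDDs with equal tensors\<close>

lemma reduced_tdd_tensor_eq_root:
  assumes "wf_tdd F" and "wf_tdd G" and "reduced_tdd F" and "reduced_tdd G"
    and "tdd_tensor F = tdd_tensor G"
  shows "wroot F = wroot G \<and> node_tensor F (root F) = node_tensor G (root G)"
proof -
  have "wroot F * node_tensor F (root F) a = wroot G * node_tensor G (root G) a" for a
    using fun_cong[OF assms(5), of a] unfolding tdd_tensor_def .
  then show ?thesis
    by (rule reduced_weighted_node_tensor_eq[OF assms(1-4) root_in_nodes[OF assms(1)]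
          root_in_nodes[OF assms(2)]])
      (fact reduced_zero_weight_target(1)[OF assms(3)] reduced_zero_weight_target(1)[OF assms(4)])+
qed

lemma reduced_tdd_tensor_eq_node_tensor_image:
  fixes F :: "('i::{finite,linorder}, 'v) tdd" and G :: "('i, 'w) tdd"
  assumes wF: "wf_tdd F" and wG: "wf_tdd G" and oF: "ordered_tdd F" and oG: "ordered_tdd G"
    and rF: "reduced_tdd F" and rG: "reduced_tdd G" and T: "tdd_tensor F = tdd_tensor G"
  shows "node_tensor F ` nodes F \<subseteq> node_tensor G ` nodes G"
proof
  fix \<phi> assume "\<phi> \<in> node_tensor F ` nodes F"
  then obtain v where v: "v \<in> nodes F" and \<phi>: "\<phi> = node_tensor F v" by blast
  from v have "(root F, v) \<in> (tdd_edges F)\<^sup>*" using wF unfolding wf_tdd_def by blast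
  then have "\<exists>u\<in>nodes G. node_tensor G u = node_tensor F v"
  proof (induction rule: rtrancl_induct)
    case base
    show ?case
      using reduced_tdd_tensor_eq_root[OF wF wG rF rG T] root_in_nodes[OF wG] by auto
  next
    case (step y z)
    then obtain u where u: "u \<in> nodes G" "node_tensor G u = node_tensor F y" by blast
    from step.hyps(2) have y: "y \<in> nterm F" and z: "z = lo F y \<or> z = hi F y"
      by (auto elim: tdd_edgesE)
    have "u \<in> nterm G" and "node_tensor G (lo G u) = node_tensor F (lo F y)"
      and "node_tensor G (hi G u) = node_tensor F (hi F y)"
      using node_tensor_eq_imp_nterm_match[OF wF wG oF oG rF rG y u(1) u(2)[symmetric]] by auto
    then show ?case
      using z lo_in_nodes[OF wG] hi_in_nodes[OF wG] by auto
  qed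
  then show "\<phi> \<in> node_tensor G ` nodes G" using \<phi> by force
qed

lemma ex_node_tensor_preserving_bij:
  fixes F :: "('i::{finite,linorder}, 'v) tdd" and G :: "('i, 'w) tdd"
  assumes "wf_tdd F" and "wf_tdd G" and "ordered_tdd F" and "ordered_tdd G"
    and "reduced_tdd F" and "reduced_tdd G" and "tdd_tensor F = tdd_tensor G"
  shows "\<exists>h. bij_betw h (nodes F) (nodes G) \<and> (\<forall>v\<in>nodes F. node_tensor G (h v) = node_tensor F v)"
proof -
  have img: "node_tensor F ` nodes F = node_tensor G ` nodes G"
    using reduced_tdd_tensor_eq_node_tensor_image[OF assms]
      reduced_tdd_tensor_eq_node_tensor_image[OF assms(2,1,4,3,6,5) assms(7)[symmetric]] by blast
  have "bij_betw (node_tensor F) (nodes F) (node_tensor G ` nodes G)"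
    using inj_on_imp_bij_betw[OF reduced_inj_on_node_tensor[OF assms(5)]] img by simp
  moreover have "bij_betw (inv_into (nodes G) (node_tensor G)) (node_tensor G ` nodes G) (nodes G)"
    by (rule bij_betw_inv_into[OF inj_on_imp_bij_betw[OF reduced_inj_on_node_tensor[OF assms(6)]]])
  ultimately have "bij_betw (inv_into (nodes G) (node_tensor G) \<circ> node_tensor F) (nodes F) (nodes G)"
    by (rule bij_betw_trans)
  moreover have "node_tensor G ((inv_into (nodes G) (node_tensor G) \<circ> node_tensor F) v)
      = node_tensor F v" if "v \<in> nodes F" for v
    using f_inv_into_f[of "node_tensor F v" "node_tensor G" "nodes G"] img that by auto
  ultimately show ?thesis by blast
qed

lemma node_tensor_preserving_bij_imp_tdd_iso:
  fixes F :: "('i::{finite,linorder}, 'v) tdd" and G :: "('i, 'w) tdd"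
  assumes wF: "wf_tdd F" and wG: "wf_tdd G" and oF: "ordered_tdd F" and oG: "ordered_tdd G"
    and rF: "reduced_tdd F" and rG: "reduced_tdd G" and T: "tdd_tensor F = tdd_tensor G"
    and bij: "bij_betw h (nodes F) (nodes G)"
    and h: "\<And>v. v \<in> nodes F \<Longrightarrow> node_tensor G (h v) = node_tensor F v"
  shows "tdd_iso F G"
proof -
  have h_node: "h v \<in> nodes G" if "v \<in> nodes F" for v
    using bij_betw_apply[OF bij that] .
  have h_eq: "h v = u" if v: "v \<in> nodes F" and "u \<in> nodes G"
    and "node_tensor F v = node_tensor G u" for v u
    using inj_onD[OF reduced_inj_on_node_tensor[OF rG] _ h_node[OF v] \<open>u \<in> nodes G\<close>] h[OF v] that(3)
    by simp
  have "h (root F) = root G" and "wroot F = wroot G"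
    using reduced_tdd_tensor_eq_root[OF wF wG rF rG T]
      h_eq[OF root_in_nodes[OF wF] root_in_nodes[OF wG]] by auto
  moreover have kind: "v \<in> nterm F \<longleftrightarrow> h v \<in> nterm G" if v: "v \<in> nodes F" for v
    using node_tensor_eq_imp_nterm_iff[OF wF wG oF oG rF rG v h_node[OF v] h[OF v, symmetric]] .
  moreover have "val G (h v) = val F v" if "v \<in> term_nodes F" for v
  proof -
    have v: "v \<in> nodes F" "v \<notin> nterm F" using that unfolding term_nodes_def by auto
    have "h v \<notin> nterm G" using kind[OF v(1)] v(2) by simp
    have "val G (h v) = node_tensor G (h v) undefined"
      using node_tensor_term[OF wG h_node[OF v(1)] \<open>h v \<notin> nterm G\<close>] by simp
    also have "\<dots> = val F v"
      using h[OF v(1)] node_tensor_term[OF wF v] by simp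
    finally show ?thesis .
  qed
  moreover have "idx G (h v) = idx F v \<and> h (lo F v) = lo G (h v) \<and> h (hi F v) = hi G (h v)
      \<and> wlo G (h v) = wlo F v \<and> whi G (h v) = whi F v" if v: "v \<in> nterm F" for v
  proof -
    have vN: "v \<in> nodes F" using nterm_in_nodes[OF wF v] .
    have hv: "h v \<in> nterm G" "idx G (h v) = idx F v" "wlo G (h v) = wlo F v" "whi G (h v) = whi F v"
      and "node_tensor G (lo G (h v)) = node_tensor F (lo F v)"
      and "node_tensor G (hi G (h v)) = node_tensor F (hi F v)"
      using node_tensor_eq_imp_nterm_match[OF wF wG oF oG rF rG v h_node[OF vN] h[OF vN, symmetric]]
      by auto
    then have "h (lo F v) = lo G (h v)" and "h (hi F v) = hi G (h v)"
      using h_eq[OF lo_in_nodes[OF wF v] lo_in_nodes[OF wG hv(1)]]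
        h_eq[OF hi_in_nodes[OF wF v] hi_in_nodes[OF wG hv(1)]] by auto
    then show ?thesis using hv by simp
  qed
  ultimately show ?thesis
    unfolding tdd_iso_def using bij by blast
qed

theorem theorem3:
  fixes F :: "('i::{finite,linorder}, 'v) tdd" and G :: "('i, 'w) tdd"
  assumes "wf_tdd F" and "wf_tdd G"
    and "ordered_tdd F" and "ordered_tdd G"
    and "reduced_tdd F" and "reduced_tdd G"
    and "tdd_tensor F = tdd_tensor G"
  shows "tdd_iso F G"
proof -
  obtain h where "bij_betw h (nodes F) (nodes G)"
    and "\<forall>v\<in>nodes F. node_tensor G (h v) = node_tensor F v"
    using ex_node_tensor_preserving_bij[OF assms] by blast
  then show ?thesis
    using node_tensor_preserving_bij_imp_tdd_iso[OF assms] by blast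
qed

end
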